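(* The map $\mathbf{x}\mapsto(\mathbf{s},h)$, defined on $\mathbb{R}^3\setminus\mathbb{I}$, is injective, where $\mathbf{s}$ is the dispersed projection of $\mathbf{x}$ onto $\mathcal{M}$ and $h$ is its signed height: $h=\|\mathbf{x}-\mathbf{s}\|$ if $\mathbf{x}$ is outside the region enclosed by $\mathcal{M}$ and $h=-\|\mathbf{x}-\mathbf{s}\|$ if $\mathbf{x}$ is inside. That is, if $\mathbf{x}_1,\mathbf{x}_2\in\mathbb{R}^3\setminus\mathbb{I}$ have equal $(\mathbf{s},h)$, then $\mathbf{x}_1=\mathbf{x}_2$.
   Context: Let $\mathcal{M}$ be a triangle mesh in $\mathbb{R}^3$ that is watertight (closed, without self-intersections) and has no faces of zero area. Each face $T=(\mathbf{v}_1,\mathbf{v}_2,\mathbf{v}_3)$ has an outward unit face normal $\mathbf{n}_T$; each vertex $\mathbf{v}$ has a unit vertex normal $\mathbf{n}_{\mathbf{v}}$, and for every face $T$ and every vertex $\mathbf{v}$ of $T$, $\langle \mathbf{n}_{\mathbf{v}},\mathbf{n}_T\rangle>0$. Vertex normal alignment of a face $T$ with orientation $\sigma\in\{+1,-1\}$: put $\mathbf{m}_T=\sigma\mathbf{n}_T$; for each $i\in\{1,2,3\}$ let $j,k$ be the other two indices, $\mathbf{e}_1=\mathbf{v}_j-\mathbf{v}_i$, $\mathbf{e}_2=\mathbf{v}_k-\mathbf{v}_i$, $\mathbf{m}_i=\sigma\mathbf{n}_{\mathbf{v}_i}$, write the in-plane part $\mathbf{m}_i-\langle\mathbf{m}_i,\mathbf{m}_T\rangle\mathbf{m}_T=c_1\mathbf{e}_1+c_2\mathbf{e}_2$,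 and define the aligned normal $\hat{\mathbf{n}}^{T,\sigma}_i=(\mathbf{m}_i-\max(0,c_1)\mathbf{e}_1-\max(0,c_2)\mathbf{e}_2)/\|\mathbf{m}_i-\max(0,c_1)\mathbf{e}_1-\max(0,c_2)\mathbf{e}_2\|$. (Aligned normals depend on the face $T$, not only on the vertex.) Barycentric interpolated projection onto $T$ with orientation $\sigma$: for $\mathbf{x}$ with $l:=\langle\mathbf{x}-\mathbf{v}_1,\sigma\mathbf{n}_T\rangle\ge 0$, set $\mathbf{v}_i'=\mathbf{v}_i+\big(l/\langle\hat{\mathbf{n}}^{T,\sigma}_i,\sigma\mathbf{n}_T\rangle\big)\hat{\mathbf{n}}^{T,\sigma}_i$, forming the parallel triangle $T'=(\mathbf{v}_1',\mathbf{v}_2',\mathbf{v}_3')$ in the plane through $\mathbf{x}$ parallel to $T$. If $\mathbf{x}\in T'$, i.e. $\mathbf{x}=\sum_i\alpha_i\mathbf{v}_i'$ with $\alpha_i\ge0$, $\sum_i\alpha_i=1$, the projection is $\mathbf{s}_T=\sum_i\alpha_i\mathbf{v}_i$. Dispersed projection of $\mathbf{x}$ (with $\sigma=+1$ if $\mathbf{x}$ is outside the region enclosed by $\mathcal{M}$ and $\sigma=-1$ if inside): (1) compute the nearest point $\tilde{\mathbf{s}}$ of $\mathcal{M}$ to $\mathbf{x}$; (2) let $\mathcal{T}$ be the set of faces containing $\tilde{\mathbf{s}}$; (3) apply vertex normal alignment with orientation $\sigma$ to each $T\in\mathcal{T}$; (4) discard those $T$ with $\mathbf{x}\notin T'$;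 (5) compute $\mathbf{s}_T$ for the remaining $T$; (6) let $\mathbf{s}$ be the $\mathbf{s}_T$ nearest to $\mathbf{x}$. It is assumed that for every $\mathbf{x}\in\mathbb{R}^3$ at least one face survives step (4), so $\mathbf{s}$ is defined. Exceptional set: for a face $T$, orientation $\sigma$, and $\mathbf{a}^{T,\sigma}_i=\hat{\mathbf{n}}^{T,\sigma}_i/\langle\hat{\mathbf{n}}^{T,\sigma}_i,\sigma\mathbf{n}_T\rangle$, let $\mathbb{I}$ be the union over all faces $T$, both $\sigma$, and all pairs of distinct vertices $\mathbf{v}_i,\mathbf{v}_j$ of $T$ of the bilinear surfaces $\{(1-u)\mathbf{v}_i+u\mathbf{v}_j+t((1-u)\mathbf{a}^{T,\sigma}_i+u\mathbf{a}^{T,\sigma}_j): u\in[0,1],t\ge0\}$ (a set of Lebesgue measure zero). For $\mathbf{x}\notin\mathbb{I}$, the dispersed projection $\mathbf{s}$ lies in the relative interior of a face. *)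

theory Defs
  imports "HOL-Analysis.Analysis"
begin

type_synonym pt = "real^3"
type_synonym face = "pt \<times> pt \<times> pt"

definition vtx :: "face \<Rightarrow> nat \<Rightarrow> pt" where
  "vtx T i = (if i = 0 then fst T else if i = 1 then fst (snd T) else snd (snd T))"

definition verts :: "face \<Rightarrow> pt set" where
  "verts T = {vtx T 0, vtx T 1, vtx T 2}"

definition tri :: "face \<Rightarrow> pt set" where
  "tri T = convex hull (verts T)"

definition surf :: "face set \<Rightarrow> pt set" where
  "surf M = (\<Union>T\<in>M. tri T)"

text \<open>Watertight triangle mesh without zero-area faces: finitely many, non-degenerate
  faces; distinct faces have distinct vertex sets; every edge of a face is shared by
  exactly two faces (closed); two distinct faces meet only in the common sub-simplex
  (no self-intersections).\<close>
definition watertight_mesh :: "face set \<Rightarrow> bool" where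
  "watertight_mesh M \<longleftrightarrow> finite M \<and> M \<noteq> {} \<and>
     (\<forall>T\<in>M. \<not> collinear (verts T)) \<and>
     (\<forall>T\<in>M. \<forall>T'\<in>M. verts T = verts T' \<longrightarrow> T = T') \<and>
     (\<forall>T\<in>M. \<forall>a\<in>verts T. \<forall>b\<in>verts T. a \<noteq> b \<longrightarrow>
          card {T'\<in>M. {a, b} \<subseteq> verts T'} = 2) \<and>
     (\<forall>T\<in>M. \<forall>T'\<in>M. T \<noteq> T' \<longrightarrow> tri T \<inter> tri T' = convex hull (verts T \<inter> verts T'))"

definition centroid :: "face \<Rightarrow> pt" where
  "centroid T = (1/3) *\<^sub>R (vtx T 0 + vtx T 1 + vtx T 2)"

definition valid_normals :: "face set \<Rightarrow> (face \<Rightarrow> pt) \<Rightarrow> (pt \<Rightarrow> pt) \<Rightarrow> bool" where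
  "valid_normals M nf nv \<longleftrightarrow>
     (\<forall>T\<in>M. norm (nf T) = 1 \<and>
        (\<forall>i<3. \<forall>j<3. nf T \<bullet> (vtx T j - vtx T i) = 0) \<and>
        (\<exists>e>0. \<forall>t. 0 < t \<and> t < e \<longrightarrow> centroid T + t *\<^sub>R nf T \<in> outside (surf M))) \<and>
     (\<forall>T\<in>M. \<forall>v\<in>verts T. norm (nv v) = 1 \<and> nv v \<bullet> nf T > 0)"

definition aligned_normal :: "(face \<Rightarrow> pt) \<Rightarrow> (pt \<Rightarrow> pt) \<Rightarrow> face \<Rightarrow> real \<Rightarrow> nat \<Rightarrow> pt" where
  "aligned_normal nf nv T \<sigma> i =
     (let j = (i + 1) mod 3; k = (i + 2) mod 3;
          e1 = vtx T j - vtx T i; e2 = vtx T k - vtx T i;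
          mT = \<sigma> *\<^sub>R nf T; mi = \<sigma> *\<^sub>R nv (vtx T i);
          w = mi - (mi \<bullet> mT) *\<^sub>R mT;
          c = (THE c :: real \<times> real. w = fst c *\<^sub>R e1 + snd c *\<^sub>R e2);
          u = mi - max 0 (fst c) *\<^sub>R e1 - max 0 (snd c) *\<^sub>R e2
      in u /\<^sub>R norm u)"

definition height_over :: "(face \<Rightarrow> pt) \<Rightarrow> face \<Rightarrow> real \<Rightarrow> pt \<Rightarrow> real" where
  "height_over nf T \<sigma> x = (x - vtx T 0) \<bullet> (\<sigma> *\<^sub>R nf T)"

definition lifted_vertex :: "(face \<Rightarrow> pt) \<Rightarrow> (pt \<Rightarrow> pt) \<Rightarrow> face \<Rightarrow> real \<Rightarrow> pt \<Rightarrow> nat \<Rightarrow> pt" where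
  "lifted_vertex nf nv T \<sigma> x i =
     vtx T i + (height_over nf T \<sigma> x / (aligned_normal nf nv T \<sigma> i \<bullet> (\<sigma> *\<^sub>R nf T)))
                 *\<^sub>R aligned_normal nf nv T \<sigma> i"

text \<open>x lies in the parallel triangle T' (face T survives step (4)).\<close>
definition in_parallel :: "(face \<Rightarrow> pt) \<Rightarrow> (pt \<Rightarrow> pt) \<Rightarrow> face \<Rightarrow> real \<Rightarrow> pt \<Rightarrow> bool" where
  "in_parallel nf nv T \<sigma> x \<longleftrightarrow> height_over nf T \<sigma> x \<ge> 0 \<and>
     (\<exists>\<alpha>::nat \<Rightarrow> real. (\<forall>i<3. \<alpha> i \<ge> 0) \<and> (\<Sum>i<3. \<alpha> i) = 1 \<and>
        x = (\<Sum>i<3. \<alpha> i *\<^sub>R lifted_vertex nf nv T \<sigma> x i))"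

definition bip_proj :: "(face \<Rightarrow> pt) \<Rightarrow> (pt \<Rightarrow> pt) \<Rightarrow> face \<Rightarrow> real \<Rightarrow> pt \<Rightarrow> pt \<Rightarrow> bool" where
  "bip_proj nf nv T \<sigma> x s \<longleftrightarrow> height_over nf T \<sigma> x \<ge> 0 \<and>
     (\<exists>\<alpha>::nat \<Rightarrow> real. (\<forall>i<3. \<alpha> i \<ge> 0) \<and> (\<Sum>i<3. \<alpha> i) = 1 \<and>
        x = (\<Sum>i<3. \<alpha> i *\<^sub>R lifted_vertex nf nv T \<sigma> x i) \<and>
        s = (\<Sum>i<3. \<alpha> i *\<^sub>R vtx T i))"

definition orient :: "face set \<Rightarrow> pt \<Rightarrow> real" where
  "orient M x = (if x \<in> inside (surf M) then -1 else 1)"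

definition nearest_point :: "face set \<Rightarrow> pt \<Rightarrow> pt \<Rightarrow> bool" where
  "nearest_point M x p \<longleftrightarrow> p \<in> surf M \<and> (\<forall>y\<in>surf M. dist x p \<le> dist x y)"

definition candidates :: "face set \<Rightarrow> (face \<Rightarrow> pt) \<Rightarrow> (pt \<Rightarrow> pt) \<Rightarrow> pt \<Rightarrow> pt \<Rightarrow> pt set" where
  "candidates M nf nv x p = {s. \<exists>T\<in>M. p \<in> tri T \<and> bip_proj nf nv T (orient M x) x s}"

text \<open>s is a dispersed projection of x (relational: allows any choice of nearest
  point and any tie-breaking).\<close>
definition disp_proj :: "face set \<Rightarrow> (face \<Rightarrow> pt) \<Rightarrow> (pt \<Rightarrow> pt) \<Rightarrow> pt \<Rightarrow> pt \<Rightarrow> bool" where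
  "disp_proj M nf nv x s \<longleftrightarrow> (\<exists>p. nearest_point M x p \<and> s \<in> candidates M nf nv x p \<and>
       (\<forall>s'\<in>candidates M nf nv x p. dist x s \<le> dist x s'))"

definition signed_height :: "face set \<Rightarrow> pt \<Rightarrow> pt \<Rightarrow> real" where
  "signed_height M x s = orient M x * norm (x - s)"

definition align_dir :: "(face \<Rightarrow> pt) \<Rightarrow> (pt \<Rightarrow> pt) \<Rightarrow> face \<Rightarrow> real \<Rightarrow> nat \<Rightarrow> pt" where
  "align_dir nf nv T \<sigma> i =
     aligned_normal nf nv T \<sigma> i /\<^sub>R (aligned_normal nf nv T \<sigma> i \<bullet> (\<sigma> *\<^sub>R nf T))"

definition exc_set :: "face set \<Rightarrow> (face \<Rightarrow> pt) \<Rightarrow> (pt \<Rightarrow> pt) \<Rightarrow> pt set" where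
  "exc_set M nf nv = (\<Union>T\<in>M. \<Union>\<sigma>\<in>{1, -1}. \<Union>i\<in>{0,1,2}. \<Union>j\<in>{0,1,2} - {i}.
     {(1 - u) *\<^sub>R vtx T i + u *\<^sub>R vtx T j
        + t *\<^sub>R ((1 - u) *\<^sub>R align_dir nf nv T \<sigma> i + u *\<^sub>R align_dir nf nv T \<sigma> j) | u t.
      0 \<le> u \<and> u \<le> 1 \<and> 0 \<le> t})"

end

theory Submission
  imports Defs
begin

text \<open>Outside the exceptional set a barycentric interpolated projection has strictly positive
  barycentric coordinates, so s lies in the relative interior of its face. Since faces of the
  mesh meet only along common sub-simplices, s determines the face and its barycentric
  coordinates, hence the interpolated direction w, and x - s = l w with l \<ge> 0. Equal signed
  heights force either x1 = s = x2 or equal orientations and equal distances, i.e. equal l.\<close>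

lemma sum_lessThan_3: "(\<Sum>i<(3::nat). f i) = f 0 + f 1 + (f 2 :: 'a::comm_monoid_add)"
  by (simp add: eval_nat_numeral add_ac)

lemma barycentric_coords_unique:
  fixes a b c :: "'a::real_vector"
  assumes nc: "\<not> collinear {a, b, c}" and sum_eq: "p + q + r = p' + q' + r'"
    and comb_eq: "p *\<^sub>R a + q *\<^sub>R b + r *\<^sub>R c = p' *\<^sub>R a + q' *\<^sub>R b + r' *\<^sub>R c"
  shows "p = p' \<and> q = q' \<and> r = r'"
proof -
  define dq where "dq = q - q'"
  define dr where "dr = r - r'"
  have dp: "p - p' = - (dq + dr)" using sum_eq unfolding dq_def dr_def by simp
  have "(p - p') *\<^sub>R a + dq *\<^sub>R b + dr *\<^sub>R c = 0"
    using comb_eq unfolding dq_def dr_def by (simp add: algebra_simps)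
  hence dep: "dq *\<^sub>R (b - a) + dr *\<^sub>R (c - a) = 0" using dp by (simp add: algebra_simps)
  have "dq = 0"
  proof (rule ccontr)
    assume "dq \<noteq> 0"
    with dep have "dq *\<^sub>R b = dq *\<^sub>R ((1 + dr / dq) *\<^sub>R a + (1 - (1 + dr / dq)) *\<^sub>R c)"
      by (simp add: algebra_simps)
    with \<open>dq \<noteq> 0\<close> have "b = (1 + dr / dq) *\<^sub>R a + (1 - (1 + dr / dq)) *\<^sub>R c"
      by simp
    hence "collinear {a, b, c}" unfolding collinear_3_expand by blast
    with nc show False by simp
  qed
  moreover have "dr = 0"
  proof (rule ccontr)
    assume "dr \<noteq> 0"
    with dep \<open>dq = 0\<close> have "c = a" by simp
    hence "collinear {a, b, c}" by (simp add: insert_commute)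
    with nc show False by simp
  qed
  ultimately show ?thesis using dp unfolding dq_def dr_def by simp
qed

lemma positive_barycentric_not_in_opposite_edge:
  fixes a b c :: "'a::real_vector"
  assumes nc: "\<not> collinear {a, b, c}" and "p + q + r = 1" and "p > 0"
  shows "p *\<^sub>R a + q *\<^sub>R b + r *\<^sub>R c \<notin> convex hull {b, c}"
proof
  assume "p *\<^sub>R a + q *\<^sub>R b + r *\<^sub>R c \<in> convex hull {b, c}"
  then obtain u v where "u + v = 1" "p *\<^sub>R a + q *\<^sub>R b + r *\<^sub>R c = u *\<^sub>R b + v *\<^sub>R c"
    unfolding convex_hull_2 by blast
  hence "p = 0"
    using barycentric_coords_unique[OF nc, of p q r 0 u v] assms(2) by simp
  with \<open>p > 0\<close> show False by simp
qed

lemma not_collinear_3_distinct: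
  assumes "\<not> collinear {a, b, c}"
  shows "a \<noteq> b" "a \<noteq> c" "b \<noteq> c"
  using assms by (auto simp: insert_commute)

lemma tri_barycentricI:
  assumes "\<alpha> 0 \<ge> 0" "\<alpha> 1 \<ge> 0" "\<alpha> 2 \<ge> 0" "\<alpha> 0 + \<alpha> 1 + \<alpha> 2 = 1"
  shows "\<alpha> 0 *\<^sub>R vtx T 0 + \<alpha> 1 *\<^sub>R vtx T 1 + \<alpha> 2 *\<^sub>R vtx T 2 \<in> tri T"
  unfolding tri_def verts_def convex_hull_3 using assms by blast

lemma watertight_mesh_not_collinear:
  assumes "watertight_mesh M" "T \<in> M"
  shows "\<not> collinear {vtx T 0, vtx T 1, vtx T 2}"
  using assms unfolding watertight_mesh_def verts_def by blast

lemma watertight_mesh_verts_subset_imp_eq: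
  assumes W: "watertight_mesh M" and "T \<in> M" "T' \<in> M" and sub: "verts T \<subseteq> verts T'"
  shows "T = T'"
proof -
  have "card (verts T) = 3"
    using not_collinear_3_distinct[OF watertight_mesh_not_collinear[OF W \<open>T \<in> M\<close>]]
    unfolding verts_def by simp
  moreover have "card (verts T') \<le> 3" unfolding verts_def by (simp add: card_insert_le_m1)
  moreover have "finite (verts T')" unfolding verts_def by simp
  ultimately have "verts T = verts T'"
    using sub card_mono[OF _ sub] by (intro card_subset_eq) auto
  thus ?thesis using W \<open>T \<in> M\<close> \<open>T' \<in> M\<close> unfolding watertight_mesh_def by blast
qed

text \<open>A point with positive barycentric coordinates in T lies on no proper sub-simplex of T,
  while two distinct faces only share such a sub-simplex.\<close>

lemma watertight_mesh_face_unique: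
  assumes W: "watertight_mesh M" and T: "T \<in> M" and T': "T' \<in> M"
    and pos: "\<alpha> 0 > 0" "\<alpha> 1 > 0" "\<alpha> 2 > 0" and sum1: "\<alpha> 0 + \<alpha> 1 + \<alpha> 2 = 1"
    and s: "s = \<alpha> 0 *\<^sub>R vtx T 0 + \<alpha> 1 *\<^sub>R vtx T 1 + \<alpha> 2 *\<^sub>R vtx T 2"
    and s_T': "s \<in> tri T'"
  shows "T = T'"
proof (rule ccontr)
  assume ne: "T \<noteq> T'"
  have nc: "\<not> collinear {vtx T 0, vtx T 1, vtx T 2}"
    by (rule watertight_mesh_not_collinear[OF W T])
  have "s \<in> tri T" unfolding s using pos sum1 by (intro tri_barycentricI) auto
  hence s_common: "s \<in> convex hull (verts T \<inter> verts T')"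
    using W T T' ne s_T' unfolding watertight_mesh_def by blast
  have "\<not> verts T \<subseteq> verts T'"
    using watertight_mesh_verts_subset_imp_eq[OF W T T'] ne by blast
  then obtain m where m: "m \<in> {0, 1, 2::nat}" "vtx T m \<notin> verts T'"
    unfolding verts_def by auto
  have off_edge: "s \<notin> convex hull {vtx T 1, vtx T 2}" "s \<notin> convex hull {vtx T 0, vtx T 2}"
    "s \<notin> convex hull {vtx T 0, vtx T 1}"
    using positive_barycentric_not_in_opposite_edge[OF nc sum1 pos(1)]
      positive_barycentric_not_in_opposite_edge[of "vtx T 1" "vtx T 0" "vtx T 2" "\<alpha> 1" "\<alpha> 0" "\<alpha> 2"]
      positive_barycentric_not_in_opposite_edge[of "vtx T 2" "vtx T 0" "vtx T 1" "\<alpha> 2" "\<alpha> 0" "\<alpha> 1"]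
      nc sum1 pos
    unfolding s by (auto simp: insert_commute algebra_simps)
  from m consider "verts T \<inter> verts T' \<subseteq> {vtx T 1, vtx T 2}"
    | "verts T \<inter> verts T' \<subseteq> {vtx T 0, vtx T 2}" | "verts T \<inter> verts T' \<subseteq> {vtx T 0, vtx T 1}"
    unfolding verts_def by auto
  then show False
    using s_common off_edge hull_mono[of "verts T \<inter> verts T'"] by cases blast+
qed

lemma exc_setI:
  assumes "T \<in> M" "\<sigma> \<in> {1, -1}" "i \<in> {0, 1, 2}" "j \<in> {0, 1, 2}" "i \<noteq> j"
    "0 \<le> u" "u \<le> 1" "0 \<le> t"
  shows "(1 - u) *\<^sub>R vtx T i + u *\<^sub>R vtx T j
        + t *\<^sub>R ((1 - u) *\<^sub>R align_dir nf nv T \<sigma> i + u *\<^sub>R align_dir nf nv T \<sigma> j) \<in> exc_set M nf nv"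
  unfolding exc_set_def
proof (intro UN_I)
  show "j \<in> {0, 1, 2} - {i}" using assms(4,5) by simp
qed (use assms in auto)

lemma lifted_vertex_eq:
  "lifted_vertex nf nv T \<sigma> x i = vtx T i + height_over nf T \<sigma> x *\<^sub>R align_dir nf nv T \<sigma> i"
  unfolding lifted_vertex_def align_dir_def by (simp add: divide_inverse)

lemma bip_proj_ray:
  assumes "bip_proj nf nv T \<sigma> x s"
  obtains \<alpha> :: "nat \<Rightarrow> real" where "\<alpha> 0 \<ge> 0" "\<alpha> 1 \<ge> 0" "\<alpha> 2 \<ge> 0" "\<alpha> 0 + \<alpha> 1 + \<alpha> 2 = 1"
    "s = \<alpha> 0 *\<^sub>R vtx T 0 + \<alpha> 1 *\<^sub>R vtx T 1 + \<alpha> 2 *\<^sub>R vtx T 2"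
    "height_over nf T \<sigma> x \<ge> 0"
    "x = s + height_over nf T \<sigma> x *\<^sub>R (\<alpha> 0 *\<^sub>R align_dir nf nv T \<sigma> 0
           + \<alpha> 1 *\<^sub>R align_dir nf nv T \<sigma> 1 + \<alpha> 2 *\<^sub>R align_dir nf nv T \<sigma> 2)"
proof -
  from assms obtain \<alpha> where l: "height_over nf T \<sigma> x \<ge> 0" and nonneg: "\<forall>i<3. \<alpha> i \<ge> 0"
    and sum1: "(\<Sum>i<3. \<alpha> i) = 1"
    and x: "x = (\<Sum>i<3. \<alpha> i *\<^sub>R lifted_vertex nf nv T \<sigma> x i)"
    and s: "s = (\<Sum>i<3. \<alpha> i *\<^sub>R vtx T i)"
    unfolding bip_proj_def by blast
  show thesis
  proof (rule that[of \<alpha>])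
    show "\<alpha> 0 \<ge> 0" "\<alpha> 1 \<ge> 0" "\<alpha> 2 \<ge> 0" using nonneg by simp_all
    show "\<alpha> 0 + \<alpha> 1 + \<alpha> 2 = 1" using sum1 by (simp only: sum_lessThan_3)
    show s': "s = \<alpha> 0 *\<^sub>R vtx T 0 + \<alpha> 1 *\<^sub>R vtx T 1 + \<alpha> 2 *\<^sub>R vtx T 2"
      using s by (simp only: sum_lessThan_3)
    show "height_over nf T \<sigma> x \<ge> 0" by (fact l)
    show "x = s + height_over nf T \<sigma> x *\<^sub>R (\<alpha> 0 *\<^sub>R align_dir nf nv T \<sigma> 0
           + \<alpha> 1 *\<^sub>R align_dir nf nv T \<sigma> 1 + \<alpha> 2 *\<^sub>R align_dir nf nv T \<sigma> 2)"
      using x unfolding s' sum_lessThan_3 lifted_vertex_eq by (simp add: algebra_simps)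
  qed
qed

text \<open>A vanishing coordinate puts x on the bilinear surface spanned by the opposite edge.\<close>

lemma bip_proj_interior:
  assumes x: "x \<notin> exc_set M nf nv" and T: "T \<in> M" and \<sigma>: "\<sigma> \<in> {1, -1}"
    and proj: "bip_proj nf nv T \<sigma> x s"
  obtains \<alpha> :: "nat \<Rightarrow> real" and l where "\<alpha> 0 > 0" "\<alpha> 1 > 0" "\<alpha> 2 > 0" "\<alpha> 0 + \<alpha> 1 + \<alpha> 2 = 1"
    "s = \<alpha> 0 *\<^sub>R vtx T 0 + \<alpha> 1 *\<^sub>R vtx T 1 + \<alpha> 2 *\<^sub>R vtx T 2" "l \<ge> 0"
    "x = s + l *\<^sub>R (\<alpha> 0 *\<^sub>R align_dir nf nv T \<sigma> 0 + \<alpha> 1 *\<^sub>R align_dir nf nv T \<sigma> 1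
                     + \<alpha> 2 *\<^sub>R align_dir nf nv T \<sigma> 2)"
proof -
  define a where "a = align_dir nf nv T \<sigma>"
  define l where "l = height_over nf T \<sigma> x"
  obtain \<alpha> :: "nat \<Rightarrow> real" where nonneg: "\<alpha> 0 \<ge> 0" "\<alpha> 1 \<ge> 0" "\<alpha> 2 \<ge> 0"
    and sum1: "\<alpha> 0 + \<alpha> 1 + \<alpha> 2 = 1"
    and s: "s = \<alpha> 0 *\<^sub>R vtx T 0 + \<alpha> 1 *\<^sub>R vtx T 1 + \<alpha> 2 *\<^sub>R vtx T 2" and l: "l \<ge> 0"
    and x_eq: "x = s + l *\<^sub>R (\<alpha> 0 *\<^sub>R a 0 + \<alpha> 1 *\<^sub>R a 1 + \<alpha> 2 *\<^sub>R a 2)"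
    by (rule bip_proj_ray[OF proj, folded a_def l_def])
  have edge: False
    if ij: "i \<in> {0, 1, 2}" "j \<in> {0, 1, 2}" "i \<noteq> j" and sum_ij: "\<alpha> i + \<alpha> j = 1"
      and x_edge: "x = \<alpha> i *\<^sub>R vtx T i + \<alpha> j *\<^sub>R vtx T j + l *\<^sub>R (\<alpha> i *\<^sub>R a i + \<alpha> j *\<^sub>R a j)"
    for i j
  proof -
    have "\<alpha> i = 1 - \<alpha> j" "0 \<le> \<alpha> j" "\<alpha> j \<le> 1" using ij sum_ij nonneg by auto
    hence "x \<in> exc_set M nf nv"
      using exc_setI[OF T \<sigma> ij, of "\<alpha> j" l nf nv] l x_edge unfolding a_def by simp
    with x show False by simp
  qed
  have "\<alpha> 0 \<noteq> 0"
  proof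
    assume "\<alpha> 0 = 0"
    with sum1 x_eq s show False by (intro edge[of 1 2]) simp_all
  qed
  moreover have "\<alpha> 1 \<noteq> 0"
  proof
    assume "\<alpha> 1 = 0"
    with sum1 x_eq s show False by (intro edge[of 0 2]) simp_all
  qed
  moreover have "\<alpha> 2 \<noteq> 0"
  proof
    assume "\<alpha> 2 = 0"
    with sum1 x_eq s show False by (intro edge[of 0 1]) simp_all
  qed
  ultimately show thesis
    using nonneg sum1 s l x_eq unfolding a_def by (intro that[of \<alpha> l]) auto
qed

lemma orient_cases: "orient M x \<in> {1, -1}"
  unfolding orient_def by simp

lemma signed_height_eq_cases:
  assumes eq: "signed_height M x1 s = signed_height M x2 s"
  shows "x1 = s \<and> x2 = s \<or> orient M x1 = orient M x2 \<and> norm (x1 - s) = norm (x2 - s)"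
proof (cases "orient M x1 = orient M x2")
  case True
  with eq orient_cases[of M x2] show ?thesis unfolding signed_height_def by auto
next
  case False
  with orient_cases[of M x1] orient_cases[of M x2]
  have "orient M x1 = - orient M x2" by auto
  with eq orient_cases[of M x2] have "norm (x1 - s) = - norm (x2 - s)"
    unfolding signed_height_def by auto
  hence "norm (x1 - s) = 0" "norm (x2 - s) = 0"
    using norm_ge_zero[of "x1 - s"] norm_ge_zero[of "x2 - s"] by linarith+
  thus ?thesis by simp
qed

lemma disp_proj_bip_proj:
  assumes "disp_proj M nf nv x s"
  obtains T where "T \<in> M" "bip_proj nf nv T (orient M x) x s"
  using assms unfolding disp_proj_def candidates_def by blast

lemma same_ray_same_length_eq:
  fixes w :: "'a::real_normed_vector"
  assumes "0 \<le> l" "0 \<le> k" "x1 - s = l *\<^sub>R w" "x2 - s = k *\<^sub>R w"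
    and "norm (x1 - s) = norm (x2 - s)"
  shows "x1 = x2"
proof -
  from assms have "l * norm w = k * norm w" by simp
  hence "l = k \<or> w = 0" by auto
  with assms(3,4) have "x1 - s = x2 - s" by auto
  thus ?thesis by simp
qed


lemma bip_proj_common_ray:
  assumes W: "watertight_mesh M"
    and x1: "x1 \<notin> exc_set M nf nv" and x2: "x2 \<notin> exc_set M nf nv"
    and T1: "T1 \<in> M" and T2: "T2 \<in> M" and \<sigma>: "\<sigma> \<in> {1, -1}"
    and proj1: "bip_proj nf nv T1 \<sigma> x1 s" and proj2: "bip_proj nf nv T2 \<sigma> x2 s"
  obtains l k w where "0 \<le> l" "0 \<le> k" "x1 - s = l *\<^sub>R w" "x2 - s = k *\<^sub>R w"
proof -
  obtain \<alpha> :: "nat \<Rightarrow> real" and l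
    where A: "\<alpha> 0 > 0" "\<alpha> 1 > 0" "\<alpha> 2 > 0" "\<alpha> 0 + \<alpha> 1 + \<alpha> 2 = 1"
    "s = \<alpha> 0 *\<^sub>R vtx T1 0 + \<alpha> 1 *\<^sub>R vtx T1 1 + \<alpha> 2 *\<^sub>R vtx T1 2" "l \<ge> 0"
    "x1 = s + l *\<^sub>R (\<alpha> 0 *\<^sub>R align_dir nf nv T1 \<sigma> 0 + \<alpha> 1 *\<^sub>R align_dir nf nv T1 \<sigma> 1
                       + \<alpha> 2 *\<^sub>R align_dir nf nv T1 \<sigma> 2)"
    by (rule bip_proj_interior[OF x1 T1 \<sigma> proj1])
  obtain \<beta> :: "nat \<Rightarrow> real" and k
    where B: "\<beta> 0 > 0" "\<beta> 1 > 0" "\<beta> 2 > 0" "\<beta> 0 + \<beta> 1 + \<beta> 2 = 1"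
    "s = \<beta> 0 *\<^sub>R vtx T2 0 + \<beta> 1 *\<^sub>R vtx T2 1 + \<beta> 2 *\<^sub>R vtx T2 2" "k \<ge> 0"
    "x2 = s + k *\<^sub>R (\<beta> 0 *\<^sub>R align_dir nf nv T2 \<sigma> 0 + \<beta> 1 *\<^sub>R align_dir nf nv T2 \<sigma> 1
                       + \<beta> 2 *\<^sub>R align_dir nf nv T2 \<sigma> 2)"
    by (rule bip_proj_interior[OF x2 T2 \<sigma> proj2])
  have "T1 = T2"
    using watertight_mesh_face_unique[OF W T1 T2 A(1-5)] tri_barycentricI[of \<beta> T2] B by simp
  moreover have "\<alpha> 0 = \<beta> 0 \<and> \<alpha> 1 = \<beta> 1 \<and> \<alpha> 2 = \<beta> 2"
  proof (rule barycentric_coords_unique)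
    show "\<not> collinear {vtx T2 0, vtx T2 1, vtx T2 2}"
      by (rule watertight_mesh_not_collinear[OF W T2])
    show "\<alpha> 0 + \<alpha> 1 + \<alpha> 2 = \<beta> 0 + \<beta> 1 + \<beta> 2" using A(4) B(4) by simp
    show "\<alpha> 0 *\<^sub>R vtx T2 0 + \<alpha> 1 *\<^sub>R vtx T2 1 + \<alpha> 2 *\<^sub>R vtx T2 2
        = \<beta> 0 *\<^sub>R vtx T2 0 + \<beta> 1 *\<^sub>R vtx T2 1 + \<beta> 2 *\<^sub>R vtx T2 2"
      using A(5) B(5) unfolding \<open>T1 = T2\<close> by (rule trans[OF sym])
  qed
  moreover define w where "w = \<alpha> 0 *\<^sub>R align_dir nf nv T1 \<sigma> 0
    + \<alpha> 1 *\<^sub>R align_dir nf nv T1 \<sigma> 1 + \<alpha> 2 *\<^sub>R align_dir nf nv T1 \<sigma> 2"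
  ultimately have "x1 - s = l *\<^sub>R w" "x2 - s = k *\<^sub>R w"
    using A(7) B(7) by simp_all
  with A(6) B(6) show thesis by (rule that)
qed

theorem lemma2:
  fixes M :: "face set" and nf :: "face \<Rightarrow> real^3" and nv :: "real^3 \<Rightarrow> real^3"
    and x1 x2 s :: "real^3"
  assumes "watertight_mesh M"
    and "valid_normals M nf nv"
    and "\<forall>x p. nearest_point M x p \<longrightarrow>
           (\<exists>T\<in>M. p \<in> tri T \<and> in_parallel nf nv T (orient M x) x)"
    and "x1 \<notin> exc_set M nf nv" and "x2 \<notin> exc_set M nf nv"
    and "disp_proj M nf nv x1 s" and "disp_proj M nf nv x2 s"
    and "signed_height M x1 s = signed_height M x2 s"
  shows "x1 = x2"
  using signed_height_eq_cases[OF assms(8)]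
proof
  assume same: "orient M x1 = orient M x2 \<and> norm (x1 - s) = norm (x2 - s)"
  obtain T1 where T1: "T1 \<in> M" "bip_proj nf nv T1 (orient M x1) x1 s"
    by (rule disp_proj_bip_proj[OF assms(6)])
  obtain T2 where T2: "T2 \<in> M" "bip_proj nf nv T2 (orient M x1) x2 s"
    using disp_proj_bip_proj[OF assms(7)] same by metis
  obtain l k w where "0 \<le> l" "0 \<le> k" "x1 - s = l *\<^sub>R w" "x2 - s = k *\<^sub>R w"
    by (rule bip_proj_common_ray[OF assms(1,4,5) T1(1) T2(1) orient_cases T1(2) T2(2)])
  then show "x1 = x2" using same[THEN conjunct2] by (rule same_ray_same_length_eq)
qed auto

end
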